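(* Let $D$ be an instance all of whose tuples are endogenous, let $\mathcal{Q}$ be a monotone query, and let $\bar a\in\mathcal{Q}(D)$. Then $(D,\bar a)\in\mathcal{VSEFP}(\mathcal{Q})$ (i.e. there exists $D'\subseteq D$ with $\mathcal{Q}(D')=\mathcal{Q}(D)\smallsetminus\{\bar a\}$) if and only if $\mathit{vc\text{-}Causes}(D,\mathcal{Q}(\bar a))\neq\emptyset$.
   Context: A query $\mathcal{Q}$ is monotone if $D_1\subseteq D_2$ implies $\mathcal{Q}(D_1)\subseteq\mathcal{Q}(D_2)$; $D\models\mathcal{Q}(\bar b)$ means $\bar b\in\mathcal{Q}(D)$. Here $D^n=D$. Let $\mathcal{Q}(D)=\{\bar a_1,\dots,\bar a_n\}$ with $\bar a=\bar a_k$. A tuple $\tau\in D^n$ is a view-conditioned counterfactual cause for $\bar a_k$ in an instance $D''$ if $D''\smallsetminus\{\tau\}\not\models\mathcal{Q}(\bar a_k)$ and $D''\smallsetminus\{\tau\}\models\mathcal{Q}(\bar a_i)$ for all $i\neq k$ (where $\bar a_1,\dots,\bar a_n$ are the answers on the original $D$). $\tau$ is a view-conditioned cause for $\bar a_k$ if there is $\Gamma\subseteq D^n$ such that $\tau$ is a view-conditioned counterfactual cause for $\bar a_k$ in $D\smallsetminus\Gamma$. $\mathit{vc\text{-}Causes}(D,\mathcal{Q}(\bar a_k))$ is the set of view-conditioned causes. $\mathcal{VSEFP}(\mathcal{Q})=\{(D,\bar a): \bar a\in\mathcal{Q}(D) \text{ and there is } D'\subseteq D \text{ with } \mathcal{Q}(D)\smallsetminus\{\bar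 a\}=\mathcal{Q}(D')\}$. *)

theory Defs
  imports Main
begin

(* An instance is a set of tuples of type 't; a query maps instances to sets of answers 'b.
   All tuples are endogenous, so the endogenous part D^n of D is D itself. *)

definition monotone_query :: "('t set \<Rightarrow> 'b set) \<Rightarrow> bool" where
  "monotone_query Q \<longleftrightarrow> (\<forall>D1 D2. D1 \<subseteq> D2 \<longrightarrow> Q D1 \<subseteq> Q D2)"

definition vc_counterfactual_cause ::
  "('t set \<Rightarrow> 'b set) \<Rightarrow> 't set \<Rightarrow> 'b \<Rightarrow> 't set \<Rightarrow> 't \<Rightarrow> bool" where
  "vc_counterfactual_cause Q D a D'' tau \<longleftrightarrow>
     a \<notin> Q (D'' - {tau}) \<and> (\<forall>b \<in> Q D. b \<noteq> a \<longrightarrow> b \<in> Q (D'' - {tau}))"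

definition vc_Causes :: "('t set \<Rightarrow> 'b set) \<Rightarrow> 't set \<Rightarrow> 'b \<Rightarrow> 't set" where
  "vc_Causes Q D a = {tau \<in> D. \<exists>\<Gamma> \<subseteq> D. vc_counterfactual_cause Q D a (D - \<Gamma>) tau}"

definition VSEFP :: "('t set \<Rightarrow> 'b set) \<Rightarrow> ('t set \<times> 'b) set" where
  "VSEFP Q = {(D, a). a \<in> Q D \<and> (\<exists>D' \<subseteq> D. Q D - {a} = Q D')}"

end

theory Submission
  imports Defs
begin

text \<open>A witness \<open>D' \<subset> D\<close> for VSEFP is recovered as \<open>D - \<Gamma> - {\<tau>}\<close> by removing any
  \<open>\<tau> \<in> D - D'\<close> last and the rest of \<open>D - D'\<close> as the contingency set \<open>\<Gamma>\<close>. Conversely,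
  a view-conditioned cause \<open>\<tau>\<close> with contingency \<open>\<Gamma>\<close> makes \<open>D - \<Gamma> - {\<tau>}\<close> a witness:
  it keeps every other answer and loses \<open>a\<close>, while monotonicity rules out new answers.\<close>

lemma vc_counterfactual_cause_iff_removal:
  "vc_counterfactual_cause Q D a D'' \<tau> \<longleftrightarrow> Q D - {a} \<subseteq> Q (D'' - {\<tau>}) \<and> a \<notin> Q (D'' - {\<tau>})"
  unfolding vc_counterfactual_cause_def by blast

lemma vc_Causes_nonempty_if_answer_removable:
  assumes "a \<in> Q D" and "D' \<subseteq> D" and "Q D - {a} = Q D'"
  shows "vc_Causes Q D a \<noteq> {}"
proof -
  from assms have "D' \<noteq> D" by auto
  with \<open>D' \<subseteq> D\<close> obtain \<tau> where \<tau>: "\<tau> \<in> D" "\<tau> \<notin> D'" by auto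
  define \<Gamma> where "\<Gamma> = D - D' - {\<tau>}"
  have "\<Gamma> \<subseteq> D" by (auto simp: \<Gamma>_def)
  moreover have "D - \<Gamma> - {\<tau>} = D'" using \<open>D' \<subseteq> D\<close> \<tau> by (auto simp: \<Gamma>_def)
  then have "vc_counterfactual_cause Q D a (D - \<Gamma>) \<tau>"
    using assms(3) by (auto simp: vc_counterfactual_cause_iff_removal)
  ultimately show ?thesis using \<open>\<tau> \<in> D\<close> unfolding vc_Causes_def by blast
qed

lemma answer_removable_if_vc_Causes_nonempty:
  assumes "monotone_query Q" and "vc_Causes Q D a \<noteq> {}"
  obtains D' where "D' \<subseteq> D" and "Q D - {a} = Q D'"
proof -
  from assms(2) obtain \<tau> \<Gamma> where "vc_counterfactual_cause Q D a (D - \<Gamma>) \<tau>"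
    unfolding vc_Causes_def by blast
  moreover have "Q (D - \<Gamma> - {\<tau>}) \<subseteq> Q D"
    using assms(1) unfolding monotone_query_def by (meson Diff_subset order_trans)
  ultimately have "Q D - {a} = Q (D - \<Gamma> - {\<tau>})"
    by (auto simp: vc_counterfactual_cause_iff_removal)
  moreover have "D - \<Gamma> - {\<tau>} \<subseteq> D" by blast
  ultimately show ?thesis by (rule that[rotated])
qed

theorem proposition9:
  fixes Q :: "'t set \<Rightarrow> 'b set" and D :: "'t set" and a :: 'b
  assumes "finite D"
    and "monotone_query Q"
    and "a \<in> Q D"
  shows "(D, a) \<in> VSEFP Q \<longleftrightarrow> vc_Causes Q D a \<noteq> {}"
proof
  assume "(D, a) \<in> VSEFP Q"
  then obtain D' where "D' \<subseteq> D" "Q D - {a} = Q D'" by (auto simp: VSEFP_def)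
  with assms(3) show "vc_Causes Q D a \<noteq> {}"
    by (rule vc_Causes_nonempty_if_answer_removable)
next
  assume "vc_Causes Q D a \<noteq> {}"
  with assms(2) obtain D' where "D' \<subseteq> D" "Q D - {a} = Q D'"
    by (rule answer_removable_if_vc_Causes_nonempty)
  with assms(3) show "(D, a) \<in> VSEFP Q" unfolding VSEFP_def by blast
qed

end
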